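(* In a single-item environment with a single real bidder whose value is drawn from the exponential distribution with mean $1$, for any $\epsilon>0$ the Deferred-Revelation Auction (DRA) over a public ledger, as described in the context, is not credible for the collateral $f=1-\epsilon$.
   Context: The bidder is quasi-linear; the exponential distribution with mean $1$ has CDF $1-e^{-t}$, virtual value $\varphi(v)=v-1$, monopoly reserve $1$. DRA over a public ledger (visible to all) with a perfectly hiding, perfectly binding, non-malleable commitment scheme: (1) every participant (the real bidder and any fake bids fabricated by the auctioneer) commits to an identifier and a bid and deposits collateral $f$; the auctioneer declares a matroid feasibility constraint $\hat{\mathcal{F}}$ and distributions $\hat D_j$ (virtual values $\hat\varphi_j$) for all committed bids; (2) each committed bid is revealed or concealed, and collateral of concealed bids is burnt; (3) among revealed bids, the set $S\in\hat{\mathcal{F}}$ maximizing $\sum_{i\in S}\hat\varphi_i(b_i)$ (lexicographic tie-breaking) is allocated, each allocated bidder paying its critical bid. The auctioneer may fabricate bids, misreport distributions and constraint (keeping the allocated real bidders feasible in the true constraint), and choose which fake bids to conceal after seeing revealed real bids. Its revenue is the real bidder's payment minus burnt collateral of its concealed fake bids. The DRA is credible for collateral $f$ if, when the real bidder bids truthfully, the auctioneer maximizes expected revenue by fabricating no bids and reporting the true distribution and constraint. *)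

theory Defs
  imports "HOL-Probability.Probability"
begin

text \<open>Single item, one real bidder (identifier 0) with value drawn from Exp(1),
  and fake bids (identifiers 1..k) fabricated by the auctioneer.\<close>

definition true_measure :: "real measure" where
  "true_measure = density lborel (\<lambda>x. ennreal (exponential_density 1 x))"

definition declared_dist :: "real measure \<Rightarrow> (real \<Rightarrow> real) \<Rightarrow> bool" where
  "declared_dist D g \<longleftrightarrow> g \<in> borel_measurable borel \<and> (\<forall>x. 0 \<le> g x)
     \<and> D = density lborel (\<lambda>x. ennreal (g x)) \<and> prob_space D"

definition vval :: "real measure \<Rightarrow> (real \<Rightarrow> real) \<Rightarrow> real \<Rightarrow> real" where
  "vval D g v = v - (1 - cdf D v) / g v"

definition matroid :: "nat set \<Rightarrow> nat set set \<Rightarrow> bool" where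
  "matroid E I \<longleftrightarrow> finite E \<and> (\<forall>S\<in>I. S \<subseteq> E) \<and> {} \<in> I
     \<and> (\<forall>S T. S \<in> I \<longrightarrow> T \<subseteq> S \<longrightarrow> T \<in> I)
     \<and> (\<forall>S T. S \<in> I \<longrightarrow> T \<in> I \<longrightarrow> card S < card T \<longrightarrow> (\<exists>x\<in>T - S. insert x S \<in> I))"

record strat =
  nfake :: nat
  fbid :: "nat \<Rightarrow> real"
  ddist :: "nat \<Rightarrow> real measure"      \<comment> \<open>declared distributions (index 0 = real bidder)\<close>
  ddens :: "nat \<Rightarrow> real \<Rightarrow> real"
  feas :: "nat set set"
  conceal :: "real \<Rightarrow> nat set"       \<comment> \<open>fake bids concealed, as a function of the revealed real bid\<close>

definition valid_strat :: "strat \<Rightarrow> bool" where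
  "valid_strat s \<longleftrightarrow> (\<forall>i\<le>nfake s. declared_dist (ddist s i) (ddens s i))
     \<and> matroid {0..nfake s} (feas s)
     \<and> (\<forall>v. conceal s v \<subseteq> {1..nfake s})"

definition bidvec :: "strat \<Rightarrow> real \<Rightarrow> nat \<Rightarrow> real" where
  "bidvec s z i = (if i = 0 then z else fbid s i)"

definition phihat :: "strat \<Rightarrow> real \<Rightarrow> nat \<Rightarrow> real" where
  "phihat s z i = vval (ddist s i) (ddens s i) (bidvec s z i)"

definition optimal_set :: "strat \<Rightarrow> real \<Rightarrow> nat set \<Rightarrow> nat set \<Rightarrow> bool" where
  "optimal_set s z R S \<longleftrightarrow> S \<in> feas s \<and> S \<subseteq> R
     \<and> (\<forall>T\<in>feas s. T \<subseteq> R \<longrightarrow> (\<Sum>i\<in>T. phihat s z i) \<le> (\<Sum>i\<in>S. phihat s z i))"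

definition lex_pref :: "nat set \<Rightarrow> nat set \<Rightarrow> bool" where
  "lex_pref S T \<longleftrightarrow> S \<noteq> T \<and> Min ((S - T) \<union> (T - S)) \<in> S"

definition winners :: "strat \<Rightarrow> real \<Rightarrow> nat set \<Rightarrow> nat set" where
  "winners s z R = (THE S. optimal_set s z R S
       \<and> (\<forall>T. optimal_set s z R T \<longrightarrow> T \<noteq> S \<longrightarrow> lex_pref S T))"

definition payment :: "strat \<Rightarrow> real \<Rightarrow> nat set \<Rightarrow> real" where
  "payment s v R = (if 0 \<in> winners s v R then Inf {z. 0 \<le> z \<and> 0 \<in> winners s z R} else 0)"

definition revealed :: "strat \<Rightarrow> real \<Rightarrow> nat set" where
  "revealed s v = {0..nfake s} - conceal s v"

text \<open>Auctioneer revenue for real value v (bid truthfully) and collateral f.\<close>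
definition revenue :: "real \<Rightarrow> strat \<Rightarrow> real \<Rightarrow> real" where
  "revenue f s v = payment s v (revealed s v) - f * real (card (conceal s v))"

definition exp_revenue :: "real \<Rightarrow> strat \<Rightarrow> real" where
  "exp_revenue f s = (\<integral>v. revenue f s v \<partial>true_measure)"

definition honest :: strat where
  "honest = \<lparr> nfake = 0, fbid = (\<lambda>_. 0), ddist = (\<lambda>_. true_measure),
     ddens = (\<lambda>_. exponential_density 1), feas = {{}, {0}}, conceal = (\<lambda>_. {}) \<rparr>"

definition credible :: "real \<Rightarrow> bool" where
  "credible f \<longleftrightarrow> (\<forall>s. valid_strat s \<longrightarrow> exp_revenue f s \<le> exp_revenue f honest)"

end

theory Submission
  imports Defs
begin

text \<open>The auctioneer fabricates one bid \<open>t = 1 + u\<close> just above the monopoly reserve and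
  declares it Exp(1)-distributed, so its virtual value \<open>u\<close> is positive and the real bidder must
  now beat \<open>t\<close>. If the real value lies in \<open>[1, t)\<close>, the auctioneer conceals the fake bid,
  forfeiting the collateral \<open>f\<close>, and sells at the reserve \<open>1\<close>; otherwise it reveals the
  fake bid and sells at \<open>t\<close>. Relative to honest behaviour this gains \<open>u\<close> with probability
  \<open>exp (- t)\<close> and loses \<open>f\<close> with probability \<open>exp (- 1) - exp (- t)\<close>, a net gain of
  \<open>exp (- 1) * (u * exp (- u) - f * (1 - exp (- u)))\<close>. Since \<open>1 - exp (- u) \<le> u\<close>, this is
  positive for small \<open>u > 0\<close> whenever \<open>f < 1\<close>.\<close>

lemma prob_space_true_measure: "prob_space true_measure"
  unfolding true_measure_def by (rule prob_space_exponential_density) simp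

lemma sets_true_measure [simp]: "sets true_measure = sets borel"
  unfolding true_measure_def by simp

lemma space_true_measure [simp]: "space true_measure = UNIV"
  unfolding true_measure_def by simp

lemma measure_true_measure_atMost:
  "measure true_measure {..a} = (if 0 \<le> a then 1 - exp (- a) else 0)"
proof -
  have "emeasure true_measure {..a} = erlang_CDF 0 1 a"
    unfolding true_measure_def by (rule emeasure_erlang_density) simp
  then show ?thesis by (simp add: measure_def erlang_CDF_0)
qed

lemma measure_true_measure_atLeast:
  assumes "0 \<le> a"
  shows "measure true_measure {a..} = exp (- a)"
proof -
  interpret prob_space true_measure by (rule prob_space_true_measure)
  have "emeasure true_measure {..<a} = emeasure true_measure {..a}"
    \<comment> \<open>a density measure does not charge the single point \<open>a\<close>\<close>
    unfolding true_measure_def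
    by (simp add: emeasure_density, intro nn_integral_cong_AE eventually_mono[OF AE_lborel_singleton[of a]])
       (auto split: split_indicator)
  then have "measure true_measure {..<a} = measure true_measure {..a}"
    by (simp add: measure_def)
  moreover have "measure true_measure {a..} = 1 - measure true_measure {..<a}"
    using prob_compl[of "{..<a}"] by (simp add: Compl_eq_Diff_UNIV[symmetric] not_less atLeast_def)
  ultimately show ?thesis
    using assms by (simp add: measure_true_measure_atMost)
qed

lemma integrable_true_measure_indicator:
  "integrable true_measure (indicator A :: real \<Rightarrow> real)" if "A \<in> sets borel"
proof -
  interpret prob_space true_measure by (rule prob_space_true_measure)
  show ?thesis using that by (intro integrable_real_indicator) (auto simp: less_top[symmetric])
qed

text \<open>Below the support the density vanishes, so the junk value \<open>x / 0 = 0\<close> makes the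
  virtual value equal to the bid.\<close>

lemma vval_exponential:
  "vval true_measure (exponential_density 1) z = (if z < 0 then z else z - 1)"
  by (simp add: vval_def cdf_def measure_true_measure_atMost exponential_density_def)

lemma declared_dist_exponential: "declared_dist true_measure (exponential_density 1)"
  using prob_space_true_measure
  by (auto simp: declared_dist_def true_measure_def exponential_density_def)

lemma matroid_rank_one:
  assumes "finite E"
  shows "matroid E (insert {} ((\<lambda>x. {x}) ` E))"
  unfolding matroid_def
proof (intro conjI allI impI)
  fix S T :: "nat set"
  assume "S \<in> insert {} ((\<lambda>x. {x}) ` E)" "T \<subseteq> S"
  then show "T \<in> insert {} ((\<lambda>x. {x}) ` E)"
    by (auto simp: subset_singleton_iff)
next
  fix S T :: "nat set"
  assume S: "S \<in> insert {} ((\<lambda>x. {x}) ` E)" and T: "T \<in> insert {} ((\<lambda>x. {x}) ` E)"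
    and "card S < card T"
  then have "S = {}" and "T \<noteq> {}" by auto
  then show "\<exists>x\<in>T - S. insert x S \<in> insert {} ((\<lambda>x. {x}) ` E)"
    using T by auto
qed (use assms in auto)

lemma optimal_set_iff:
  "optimal_set s z R S \<longleftrightarrow> S \<in> {T \<in> feas s. T \<subseteq> R}
     \<and> (\<forall>T \<in> {T \<in> feas s. T \<subseteq> R}. (\<Sum>i\<in>T. phihat s z i) \<le> (\<Sum>i\<in>S. phihat s z i))"
  unfolding optimal_set_def by blast

lemma winners_eqI:
  assumes fin: "\<And>T. T \<in> feas s \<Longrightarrow> T \<subseteq> R \<Longrightarrow> finite T"
    and opt: "optimal_set s z R S"
    and pref: "\<And>T. optimal_set s z R T \<Longrightarrow> T \<noteq> S \<Longrightarrow> lex_pref S T"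
  shows "winners s z R = S"
  unfolding winners_def
proof (rule the_equality)
  show "optimal_set s z R S \<and> (\<forall>T. optimal_set s z R T \<longrightarrow> T \<noteq> S \<longrightarrow> lex_pref S T)"
    using opt pref by blast
next
  fix S' assume S': "optimal_set s z R S' \<and> (\<forall>T. optimal_set s z R T \<longrightarrow> T \<noteq> S' \<longrightarrow> lex_pref S' T)"
  show "S' = S"
  proof (rule ccontr)
    assume "S' \<noteq> S"
    then have "lex_pref S S'" "lex_pref S' S" using pref S' opt by blast+
    define D where "D = (S - S') \<union> (S' - S)"
    have "finite S" "finite S'" using fin opt S' by (auto simp: optimal_set_def)
    then have "Min D \<in> D" using \<open>S' \<noteq> S\<close> unfolding D_def by (intro Min_in) auto
    moreover have "Min D \<in> S" "Min D \<in> S'"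
      using \<open>lex_pref S S'\<close> \<open>lex_pref S' S\<close> unfolding lex_pref_def D_def by (auto simp: Un_commute)
    ultimately show False unfolding D_def by auto
  qed
qed

lemma winners_one_candidate:
  assumes F: "{T \<in> feas s. T \<subseteq> R} = {{}, {i}}"
  shows "winners s z R = (if 0 \<le> phihat s z i then {i} else {})"
proof (rule winners_eqI)
  show "finite T" if "T \<in> feas s" "T \<subseteq> R" for T
    using F[THEN eqset_imp_iff, of T] that by auto
  show "optimal_set s z R (if 0 \<le> phihat s z i then {i} else {})"
    unfolding optimal_set_iff F by auto
  show "lex_pref (if 0 \<le> phihat s z i then {i} else {}) T"
    if "optimal_set s z R T" "T \<noteq> (if 0 \<le> phihat s z i then {i} else {})" for T
    using that unfolding optimal_set_iff F by (auto simp: lex_pref_def split: if_splits)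
qed

lemma winners_two_candidates:
  assumes F: "{T \<in> feas s. T \<subseteq> R} = {{}, {i}, {j}}" and "i < j"
    and pos: "0 < phihat s z j"
  shows "winners s z R = (if phihat s z j \<le> phihat s z i then {i} else {j})"
proof (rule winners_eqI)
  show "finite T" if "T \<in> feas s" "T \<subseteq> R" for T
    using F[THEN eqset_imp_iff, of T] that by auto
  show "optimal_set s z R (if phihat s z j \<le> phihat s z i then {i} else {j})"
    using pos unfolding optimal_set_iff F by auto
  show "lex_pref (if phihat s z j \<le> phihat s z i then {i} else {j}) T"
    if "optimal_set s z R T" "T \<noteq> (if phihat s z j \<le> phihat s z i then {i} else {j})" for T
    using that pos \<open>i < j\<close> unfolding optimal_set_iff F
    by (auto simp: lex_pref_def insert_Diff_if split: if_splits)
qed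

lemma payment_threshold:
  assumes "\<And>z. 0 \<in> winners s z R \<longleftrightarrow> c \<le> z" and "0 \<le> c"
  shows "payment s v R = (if c \<le> v then c else 0)"
proof -
  have "{z. 0 \<le> z \<and> 0 \<in> winners s z R} = {c..}" using assms by auto
  then show ?thesis unfolding payment_def using assms by simp
qed

lemma phihat_honest: "phihat honest z 0 = (if z < 0 then z else z - 1)"
  by (simp add: honest_def phihat_def bidvec_def vval_exponential)

lemma revenue_honest: "revenue f honest v = indicator {1..} v"
proof -
  have "{T \<in> feas honest. T \<subseteq> {0}} = {{}, {0}}"
    by (auto simp: honest_def)
  then have "0 \<in> winners honest z {0} \<longleftrightarrow> 1 \<le> z" for z
    by (simp add: winners_one_candidate phihat_honest)
  then have "payment honest v {0} = (if 1 \<le> v then 1 else 0)"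
    by (intro payment_threshold) auto
  moreover have "revealed honest v = {0}" "conceal honest v = {}"
    by (simp_all add: revealed_def honest_def)
  ultimately show ?thesis by (simp add: revenue_def)
qed

lemma exp_revenue_honest: "exp_revenue f honest = exp (- 1)"
  unfolding exp_revenue_def revenue_honest using measure_true_measure_atLeast[of 1] by simp

definition shill_strategy :: "real \<Rightarrow> strat" where
  "shill_strategy t = \<lparr> nfake = 1, fbid = (\<lambda>_. t), ddist = (\<lambda>_. true_measure),
     ddens = (\<lambda>_. exponential_density 1), feas = insert {} ((\<lambda>x. {x}) ` {0..1}),
     conceal = (\<lambda>v. if 1 \<le> v \<and> v < t then {1} else {}) \<rparr>"

lemma valid_shill_strategy: "valid_strat (shill_strategy t)"
  unfolding valid_strat_def shill_strategy_def
  using declared_dist_exponential matroid_rank_one[of "{0..1}"] by auto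

lemma phihat_shill_strategy:
  "phihat (shill_strategy t) z 0 = (if z < 0 then z else z - 1)"
  "i \<noteq> 0 \<Longrightarrow> 0 \<le> t \<Longrightarrow> phihat (shill_strategy t) z i = t - 1"
  by (simp_all add: shill_strategy_def phihat_def bidvec_def vval_exponential)

lemma payment_shill_strategy_concealed:
  "payment (shill_strategy t) v {0} = (if 1 \<le> v then 1 else 0)"
proof (rule payment_threshold)
  have "{T \<in> feas (shill_strategy t). T \<subseteq> {0}} = {{}, {0}}"
    by (auto simp: shill_strategy_def)
  then show "0 \<in> winners (shill_strategy t) z {0} \<longleftrightarrow> 1 \<le> z" for z
    by (simp add: winners_one_candidate phihat_shill_strategy)
qed simp

lemma payment_shill_strategy_revealed:
  assumes "1 < t"
  shows "payment (shill_strategy t) v {0, 1} = (if t \<le> v then t else 0)"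
proof (rule payment_threshold)
  have F: "{T \<in> feas (shill_strategy t). T \<subseteq> {0, 1}} = {{}, {0}, {1}}"
    by (auto simp: shill_strategy_def)
  have fake: "phihat (shill_strategy t) z 1 = t - 1" for z
    using assms by (simp add: phihat_shill_strategy)
  have "winners (shill_strategy t) z {0, 1}
      = (if t - 1 \<le> phihat (shill_strategy t) z 0 then {0} else {1})" for z
    using winners_two_candidates[OF F, of z] assms unfolding fake by simp
  then show "0 \<in> winners (shill_strategy t) z {0, 1} \<longleftrightarrow> t \<le> z" for z
    using assms by (simp add: phihat_shill_strategy)
qed (use assms in simp)

lemma revenue_shill_strategy:
  assumes "1 < t"
  shows "revenue f (shill_strategy t) v
    = t * indicator {t..} v + (1 - f) * (indicator {1..} v - indicator {t..} v)"
proof (cases "1 \<le> v \<and> v < t")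
  case True
  then have "revealed (shill_strategy t) v = {0}" "conceal (shill_strategy t) v = {1}"
    by (auto simp: revealed_def shill_strategy_def)
  then show ?thesis
    using True payment_shill_strategy_concealed[of t v] by (simp add: revenue_def indicator_def)
next
  case False
  then have "revealed (shill_strategy t) v = {0, 1}" "conceal (shill_strategy t) v = {}"
    by (auto simp: revealed_def shill_strategy_def)
  then show ?thesis
    using False assms payment_shill_strategy_revealed[OF assms, of v]
    by (auto simp: revenue_def indicator_def)
qed

lemma exp_revenue_shill_strategy:
  assumes "1 < t"
  shows "exp_revenue f (shill_strategy t) = t * exp (- t) + (1 - f) * (exp (- 1) - exp (- t))"
  using assms measure_true_measure_atLeast[of 1] measure_true_measure_atLeast[of t]
  unfolding exp_revenue_def revenue_shill_strategy[OF assms]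
  by (simp add: integrable_true_measure_indicator)

lemma exists_shill_margin:
  fixes f :: real
  assumes "f < 1"
  shows "\<exists>u > 0. f * (1 - exp (- u)) < u * exp (- u)"
proof (intro exI conjI)
  define u where "u = (1 - f) / 2"
  show "0 < u" using assms by (simp add: u_def)
  have "exp (- u) < 1" "1 - u \<le> exp (- u)"
    using \<open>0 < u\<close> exp_ge_add_one_self[of "- u"] by auto
  show "f * (1 - exp (- u)) < u * exp (- u)"
  proof (cases "f \<le> 0")
    case True
    then have "f * (1 - exp (- u)) \<le> 0"
      using \<open>exp (- u) < 1\<close> by (simp add: mult_nonpos_nonneg)
    also have "\<dots> < u * exp (- u)"
      using \<open>0 < u\<close> by simp
    finally show ?thesis .
  next
    case False
    then have "f * (1 - exp (- u)) \<le> f * u"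
      using \<open>1 - u \<le> exp (- u)\<close> by (intro mult_left_mono) auto
    also have "\<dots> < (1 - u) * u"
      using \<open>0 < u\<close> assms by (intro mult_strict_right_mono) (simp_all add: u_def field_simps)
    also have "\<dots> \<le> u * exp (- u)"
      using \<open>0 < u\<close> \<open>1 - u \<le> exp (- u)\<close> by (simp add: mult.commute)
    finally show ?thesis .
  qed
qed

theorem not_credible_if_collateral_less_one:
  assumes "f < 1"
  shows "\<not> credible f"
proof
  assume "credible f"
  obtain u where "0 < u" and margin: "f * (1 - exp (- u)) < u * exp (- u)"
    using exists_shill_margin[OF assms] by blast
  have "exp (- (1 + u)) = exp (- 1) * exp (- u)"
    by (simp flip: exp_add)
  then have "exp_revenue f (shill_strategy (1 + u))
      = exp (- 1) + exp (- 1) * (u * exp (- u) - f * (1 - exp (- u)))"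
    using \<open>0 < u\<close> by (simp add: exp_revenue_shill_strategy algebra_simps)
  also have "\<dots> > exp_revenue f honest"
    using margin by (simp add: exp_revenue_honest)
  finally show False
    using \<open>credible f\<close> valid_shill_strategy unfolding credible_def by (meson not_le)
qed

theorem mainTheorem7:
  fixes \<epsilon> :: real
  assumes "\<epsilon> > 0"
  shows "\<not> credible (1 - \<epsilon>)"
  using assms by (intro not_credible_if_collateral_less_one) simp

end
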